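(* For every finite simple graph $\Gamma$ on vertex set $V$, $F(P_{B(\Gamma)})=F_\Gamma$. Consequently $F_\Gamma=\sum_{\alpha\models |V|}\zeta_\alpha(\Gamma)M_\alpha$, where $\zeta_\alpha(\Gamma)$ is the number of ordered colorings $\lambda:V\to\{1,\dots,k(\alpha)\}$ that are surjective and have type $\alpha$.
   Context: For a finite simple graph $\Gamma$ on $V$, $B(\Gamma)$ is the collection of nonempty $I\subseteq V$ such that the induced subgraph $\Gamma|_I$ is connected; $P_{B(\Gamma)}=\sum_{I\in B(\Gamma)}\mathrm{Conv}\{e_i:i\in I\}\subset\mathbb{R}^V$ (the graph-associahedron). For a convex polytope $Q\subset\mathbb{R}^V$, $f:V\to\mathbb{N}=\{1,2,\dots\}$ is $Q$-generic if $x\mapsto\sum_v f(v)x_v$ attains its maximum over $Q$ at a unique point, and $F(Q)=\sum_{f\ Q\text{-generic}}\prod_{v}x_{f(v)}$. For a composition $\alpha=(a_1,\dots,a_k)$ of length $k(\alpha)=k$, $M_\alpha=\sum_{i_1<\dots<i_k}x_{i_1}^{a_1}\cdots x_{i_k}^{a_k}$. A coloring is a map $\lambda:V\to\mathbb{N}$; let $i_1<\dots<i_k$ be its values and $I_j=\lambda^{-1}(\{i_1,\dots,i_j\})$, $I_0=\emptyset$. It is ordered if for each $j$, no two distinct vertices $u,w$ with $\lambda(u)=\lambda(w)=i_j$ are joined by a path in $\Gamma$ (possibly a single edge) all of whose internal vertices lie in $I_{j-1}$. Its type is $(|\lambda^{-1}(i_1)|,\dots,|\lambda^{-1}(i_k)|)$.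 $F_\Gamma=\sum_{\lambda\text{ ordered}}\prod_{v\in V}x_{\lambda(v)}$; for the empty graph $F_\Gamma=1$. *)

theory Defs
  imports Complex_Main "HOL-Library.Multiset"
begin

definition simple_graph :: "'a set \<Rightarrow> ('a \<Rightarrow> 'a \<Rightarrow> bool) \<Rightarrow> bool" where
  "simple_graph V E \<longleftrightarrow> finite V \<and> (\<forall>u w. E u w \<longrightarrow> u \<in> V \<and> w \<in> V)
     \<and> (\<forall>u w. E u w \<longrightarrow> E w u) \<and> (\<forall>u. \<not> E u u)"

definition is_path :: "('a \<Rightarrow> 'a \<Rightarrow> bool) \<Rightarrow> 'a list \<Rightarrow> bool" where
  "is_path E ps \<longleftrightarrow> ps \<noteq> [] \<and> distinct ps \<and> successively E ps"

definition induced_connected :: "('a \<Rightarrow> 'a \<Rightarrow> bool) \<Rightarrow> 'a set \<Rightarrow> bool" where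
  "induced_connected E I \<longleftrightarrow>
     (\<forall>u\<in>I. \<forall>w\<in>I. \<exists>xs. is_path E (u # xs @ [w]) \<and> set xs \<subseteq> I \<or> u = w)"

definition building_set :: "'a set \<Rightarrow> ('a \<Rightarrow> 'a \<Rightarrow> bool) \<Rightarrow> 'a set set" where
  "building_set V E = {I. I \<subseteq> V \<and> I \<noteq> {} \<and> induced_connected E I}"

definition simplex :: "'a set \<Rightarrow> ('a \<Rightarrow> real) set" where
  "simplex I = {x. \<exists>c :: 'a \<Rightarrow> real. (\<forall>i\<in>I. c i \<ge> 0) \<and> (\<Sum>i\<in>I. c i) = 1
       \<and> x = (\<lambda>v. \<Sum>i\<in>I. c i * (if v = i then 1 else 0))}"

definition minkowski_sum :: "'b set \<Rightarrow> ('b \<Rightarrow> ('a \<Rightarrow> real) set) \<Rightarrow> ('a \<Rightarrow> real) set" where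
  "minkowski_sum B P = {x. \<exists>p. (\<forall>I\<in>B. p I \<in> P I) \<and> x = (\<lambda>v. \<Sum>I\<in>B. p I v)}"

definition graph_associahedron :: "'a set \<Rightarrow> ('a \<Rightarrow> 'a \<Rightarrow> bool) \<Rightarrow> ('a \<Rightarrow> real) set" where
  "graph_associahedron V E = minkowski_sum (building_set V E) simplex"

definition generic :: "'a set \<Rightarrow> ('a \<Rightarrow> real) set \<Rightarrow> ('a \<Rightarrow> nat) \<Rightarrow> bool" where
  "generic V Q f \<longleftrightarrow> (\<exists>!x. x \<in> Q \<and> (\<forall>y\<in>Q. (\<Sum>v\<in>V. real (f v) * y v) \<le> (\<Sum>v\<in>V. real (f v) * x v)))"

text \<open>A monomial in the variables x_1, x_2, ... is encoded by the multiset of indices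
(with multiplicity = exponent). The monomial prod_{v in V} x_{f v} is
image_mset f (mset_set V). A formal power series is encoded by its coefficient
function nat multiset => nat.\<close>

definition pos_maps :: "'a set \<Rightarrow> ('a \<Rightarrow> nat) set" where
  "pos_maps V = {f. (\<forall>v\<in>V. f v \<ge> 1) \<and> (\<forall>v. v \<notin> V \<longrightarrow> f v = 0)}"

definition F_poly :: "'a set \<Rightarrow> ('a \<Rightarrow> real) set \<Rightarrow> nat multiset \<Rightarrow> nat" where
  "F_poly V Q m = card {f \<in> pos_maps V. generic V Q f \<and> image_mset f (mset_set V) = m}"

definition ordered_coloring :: "'a set \<Rightarrow> ('a \<Rightarrow> 'a \<Rightarrow> bool) \<Rightarrow> ('a \<Rightarrow> nat) \<Rightarrow> bool" where
  "ordered_coloring V E lam \<longleftrightarrow>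
     (\<forall>c \<in> lam ` V. \<forall>u\<in>V. \<forall>w\<in>V. lam u = c \<and> lam w = c \<and> u \<noteq> w \<longrightarrow>
        \<not> (\<exists>xs. is_path E (u # xs @ [w]) \<and> set xs \<subseteq> {v\<in>V. lam v < c}))"

definition F_graph :: "'a set \<Rightarrow> ('a \<Rightarrow> 'a \<Rightarrow> bool) \<Rightarrow> nat multiset \<Rightarrow> nat" where
  "F_graph V E m = card {lam \<in> pos_maps V. ordered_coloring V E lam \<and> image_mset lam (mset_set V) = m}"

definition compositions :: "nat \<Rightarrow> nat list set" where
  "compositions n = {\<alpha>. (\<forall>a\<in>set \<alpha>. a \<ge> 1) \<and> sum_list \<alpha> = n}"

definition M_coeff :: "nat list \<Rightarrow> nat multiset \<Rightarrow> nat" where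
  "M_coeff \<alpha> m = (if \<exists>ix. length ix = length \<alpha> \<and> sorted_wrt (<) ix \<and> (\<forall>i\<in>set ix. i \<ge> 1)
        \<and> m = (\<Sum>j<length \<alpha>. replicate_mset (\<alpha> ! j) (ix ! j)) then 1 else 0)"

definition zeta :: "'a set \<Rightarrow> ('a \<Rightarrow> 'a \<Rightarrow> bool) \<Rightarrow> nat list \<Rightarrow> nat" where
  "zeta V E \<alpha> = card {lam \<in> pos_maps V. ordered_coloring V E lam
       \<and> lam ` V = {1..length \<alpha>}
       \<and> (\<forall>j<length \<alpha>. card {v\<in>V. lam v = j + 1} = \<alpha> ! j)}"

end

theory Submission
  imports Defs
begin

text \<open>
  A linear form attains its maximum over a Minkowski sum exactly at the sums of maximizers of the
  summands, so f is generic for the graph associahedron iff it has a unique maximizer on every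
  simplex Conv{e_i : i \<in> I} with I connected, i.e. iff f has a unique maximal vertex on every
  connected I. This is the ordered-coloring condition: two vertices of the same colour c joined
  through vertices of smaller colour span a connected set on which c is the maximum twice, and
  conversely a repeated maximum on a connected set yields such a path by cutting a connecting path
  at the first vertex of maximal colour.

  For the expansion, an ordered coloring stays ordered when its colours are relabelled by a
  strictly increasing map, so the colorings with content x_{i_1}^{a_1} \<cdots> x_{i_k}^{a_k}
  (i_1 < \<dots> < i_k) correspond bijectively to the surjective ordered colorings onto {1..k} of
  type (a_1, \<dots>, a_k); and the monomial determines the composition \<alpha> with M_\<alpha> containing it.
\<close>

section \<open>Maximizing linear forms over Minkowski sums and simplices\<close>

lemma finite_ex_max:
  fixes w :: "'a \<Rightarrow> 'b::linorder"
  assumes "finite I" and "I \<noteq> {}"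
  obtains a where "a \<in> I" and "\<forall>b\<in>I. w b \<le> w a"
proof -
  have "Max (w ` I) \<in> w ` I" using assms by simp
  then obtain a where "a \<in> I" "w a = Max (w ` I)" by force
  then show ?thesis using that assms by simp
qed

definition pairing :: "'a set \<Rightarrow> ('a \<Rightarrow> real) \<Rightarrow> ('a \<Rightarrow> real) \<Rightarrow> real" where
  "pairing V w y = (\<Sum>v\<in>V. w v * y v)"

definition maximizes :: "'a set \<Rightarrow> ('a \<Rightarrow> real) \<Rightarrow> ('a \<Rightarrow> real) set \<Rightarrow> ('a \<Rightarrow> real) \<Rightarrow> bool" where
  "maximizes V w Q x \<longleftrightarrow> x \<in> Q \<and> (\<forall>y\<in>Q. pairing V w y \<le> pairing V w x)"

lemma generic_iff_unique_maximizer: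
  "generic V Q f \<longleftrightarrow> (\<exists>!x. maximizes V (\<lambda>v. real (f v)) Q x)"
  unfolding generic_def maximizes_def pairing_def ..

lemma pairing_sum: "pairing V w (\<lambda>v. \<Sum>I\<in>B. p I v) = (\<Sum>I\<in>B. pairing V w (p I))"
  unfolding pairing_def by (simp add: sum_distrib_left sum.swap[of _ V])

lemma sum_fun_upd_eq:
  fixes g :: "'b \<Rightarrow> 'c::ab_group_add"
  assumes "finite B" and "J \<in> B"
  shows "(\<Sum>I\<in>B. g ((p(J := y)) I)) = (\<Sum>I\<in>B. g (p I)) + (g y - g (p J))"
  using assms by (simp add: sum.remove[OF assms] cong: sum.cong_simp)

lemma sum_in_minkowski_sum:
  "\<forall>I\<in>B. p I \<in> P I \<Longrightarrow> (\<lambda>v. \<Sum>I\<in>B. p I v) \<in> minkowski_sum B P"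
  unfolding minkowski_sum_def by blast

lemma maximizes_minkowski_sum_iff:
  assumes "finite B" and "\<forall>I\<in>B. p I \<in> P I"
  shows "maximizes V w (minkowski_sum B P) (\<lambda>v. \<Sum>I\<in>B. p I v)
    \<longleftrightarrow> (\<forall>I\<in>B. maximizes V w (P I) (p I))"
proof
  assume max: "maximizes V w (minkowski_sum B P) (\<lambda>v. \<Sum>I\<in>B. p I v)"
  show "\<forall>I\<in>B. maximizes V w (P I) (p I)"
  proof (intro ballI, rule ccontr)
    fix J assume J: "J \<in> B" and "\<not> maximizes V w (P J) (p J)"
    then obtain y where y: "y \<in> P J" "pairing V w (p J) < pairing V w y"
      using assms(2) unfolding maximizes_def by force
    define q where "q = p(J := y)"
    have "(\<lambda>v. \<Sum>I\<in>B. q I v) \<in> minkowski_sum B P"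
      using assms(2) y(1) by (intro sum_in_minkowski_sum) (simp add: q_def)
    then have "(\<Sum>I\<in>B. pairing V w (q I)) \<le> (\<Sum>I\<in>B. pairing V w (p I))"
      using max unfolding maximizes_def by (metis pairing_sum)
    moreover have "(\<Sum>I\<in>B. pairing V w (q I))
        = (\<Sum>I\<in>B. pairing V w (p I)) + (pairing V w y - pairing V w (p J))"
      unfolding q_def by (rule sum_fun_upd_eq[OF assms(1) J, where g = "pairing V w"])
    ultimately show False using y(2) by linarith
  qed
next
  assume max: "\<forall>I\<in>B. maximizes V w (P I) (p I)"
  have "pairing V w y \<le> pairing V w (\<lambda>v. \<Sum>I\<in>B. p I v)" if y: "y \<in> minkowski_sum B P" for y
  proof -
    obtain q where q: "\<forall>I\<in>B. q I \<in> P I" "y = (\<lambda>v. \<Sum>I\<in>B. q I v)"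
      using y unfolding minkowski_sum_def by blast
    have "(\<Sum>I\<in>B. pairing V w (q I)) \<le> (\<Sum>I\<in>B. pairing V w (p I))"
      using max q(1) unfolding maximizes_def by (intro sum_mono) blast
    then show ?thesis unfolding q(2) pairing_sum .
  qed
  then show "maximizes V w (minkowski_sum B P) (\<lambda>v. \<Sum>I\<in>B. p I v)"
    unfolding maximizes_def using sum_in_minkowski_sum[OF assms(2)] by blast
qed

lemma unique_maximizer_minkowski_sum_iff:
  assumes "finite B" and "\<forall>I\<in>B. \<exists>x. maximizes V w (P I) x"
  shows "(\<exists>!x. maximizes V w (minkowski_sum B P) x) \<longleftrightarrow> (\<forall>I\<in>B. \<exists>!x. maximizes V w (P I) x)"
proof -
  obtain p where p: "\<forall>I\<in>B. maximizes V w (P I) (p I)"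
    using bchoice[OF assms(2)] by blast
  have pP: "\<forall>I\<in>B. p I \<in> P I" using p unfolding maximizes_def by blast
  have max_p: "maximizes V w (minkowski_sum B P) (\<lambda>v. \<Sum>I\<in>B. p I v)"
    using maximizes_minkowski_sum_iff[OF assms(1) pP] p by blast
  show ?thesis
  proof
    assume uniq: "\<exists>!x. maximizes V w (minkowski_sum B P) x"
    show "\<forall>I\<in>B. \<exists>!x. maximizes V w (P I) x"
    proof
      fix J assume J: "J \<in> B"
      have "y = p J" if y: "maximizes V w (P J) y" for y
      proof
        fix u
        define q where "q = p(J := y)"
        have "\<forall>I\<in>B. maximizes V w (P I) (q I)" using p y by (simp add: q_def)
        moreover have qP: "\<forall>I\<in>B. q I \<in> P I" using calculation unfolding maximizes_def by blast
        ultimately have "maximizes V w (minkowski_sum B P) (\<lambda>v. \<Sum>I\<in>B. q I v)"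
          using maximizes_minkowski_sum_iff[OF assms(1) qP] by blast
        then have "(\<lambda>v. \<Sum>I\<in>B. q I v) = (\<lambda>v. \<Sum>I\<in>B. p I v)" using uniq max_p by blast
        then have "(\<Sum>I\<in>B. q I u) = (\<Sum>I\<in>B. p I u)" by metis
        then show "y u = p J u"
          unfolding q_def sum_fun_upd_eq[OF assms(1) J, of "\<lambda>x. x u"] by simp
      qed
      then show "\<exists>!x. maximizes V w (P J) x" using p J by blast
    qed
  next
    assume uniq: "\<forall>I\<in>B. \<exists>!x. maximizes V w (P I) x"
    have "x = (\<lambda>v. \<Sum>I\<in>B. p I v)" if x: "maximizes V w (minkowski_sum B P) x" for x
    proof -
      obtain q where q: "\<forall>I\<in>B. q I \<in> P I" "x = (\<lambda>v. \<Sum>I\<in>B. q I v)"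
        using x unfolding maximizes_def minkowski_sum_def by blast
      then have "\<forall>I\<in>B. maximizes V w (P I) (q I)"
        using maximizes_minkowski_sum_iff[OF assms(1) q(1)] x by blast
      then have "\<forall>I\<in>B. q I = p I" using uniq p by blast
      then show ?thesis unfolding q(2) by simp
    qed
    then show "\<exists>!x. maximizes V w (minkowski_sum B P) x" using max_p by blast
  qed
qed

definition unit_vector :: "'a \<Rightarrow> 'a \<Rightarrow> real" where
  "unit_vector a = (\<lambda>v. if v = a then 1 else 0)"

lemma pairing_simplex_point:
  assumes "finite V" and "I \<subseteq> V"
  shows "pairing V w (\<lambda>v. \<Sum>i\<in>I. c i * (if v = i then 1 else 0)) = (\<Sum>i\<in>I. c i * w i)"
proof -
  have "pairing V w (\<lambda>v. \<Sum>i\<in>I. c i * (if v = i then 1 else 0))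
      = (\<Sum>i\<in>I. \<Sum>v\<in>V. if v = i then c i * w i else 0)"
    unfolding pairing_def sum_distrib_left by (subst sum.swap) (auto intro!: sum.cong)
  also have "\<dots> = (\<Sum>i\<in>I. c i * w i)"
    using assms by (intro sum.cong) auto
  finally show ?thesis .
qed

lemma unit_vector_in_simplex:
  assumes "finite I" and "a \<in> I"
  shows "unit_vector a \<in> simplex I"
  unfolding simplex_def
proof (intro CollectI exI[of _ "unit_vector a"] conjI ext)
  fix v
  have "(\<Sum>i\<in>I. unit_vector a i * (if v = i then 1 else 0)) = (\<Sum>i\<in>I. if i = a then unit_vector a v else 0 :: real)"
    by (intro sum.cong) (auto simp: unit_vector_def)
  then show "unit_vector a v = (\<Sum>i\<in>I. unit_vector a i * (if v = i then 1 else 0 :: real))"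
    using assms by simp
qed (use assms in \<open>auto simp: unit_vector_def\<close>)

lemma pairing_unit_vector:
  assumes "finite V" and "a \<in> V"
  shows "pairing V w (unit_vector a) = w a"
  using assms unfolding pairing_def unit_vector_def by (simp add: if_distrib cong: if_cong)

lemma pairing_simplex_le:
  assumes "finite V" and "I \<subseteq> V" and "y \<in> simplex I" and "\<forall>i\<in>I. w i \<le> M"
  shows "pairing V w y \<le> M"
proof -
  obtain c where c: "\<forall>i\<in>I. c i \<ge> 0" "(\<Sum>i\<in>I. c i) = 1"
    "y = (\<lambda>v. \<Sum>i\<in>I. c i * (if v = i then 1 else 0))"
    using assms(3) unfolding simplex_def by blast
  have "pairing V w y = (\<Sum>i\<in>I. c i * w i)"
    unfolding c(3) pairing_simplex_point[OF assms(1,2)] ..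
  also have "\<dots> \<le> (\<Sum>i\<in>I. c i * M)"
    using c(1) assms(4) by (intro sum_mono mult_left_mono) auto
  also have "\<dots> = M" using c(2) by (simp add: sum_distrib_right[symmetric])
  finally show ?thesis .
qed

lemma maximizes_simplex_unit_vector:
  assumes "finite V" and "I \<subseteq> V" and "a \<in> I" and "\<forall>b\<in>I. w b \<le> w a"
  shows "maximizes V w (simplex I) (unit_vector a)"
  unfolding maximizes_def
  using assms pairing_simplex_le[OF assms(1,2)] pairing_unit_vector[OF assms(1)]
    unit_vector_in_simplex[OF finite_subset[OF assms(2,1)] assms(3)] by auto

lemma maximizer_simplex_eq_unit_vector:
  assumes "finite V" and "I \<subseteq> V" and "a \<in> I" and "\<forall>b\<in>I. b \<noteq> a \<longrightarrow> w b < w a"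
    and "maximizes V w (simplex I) y"
  shows "y = unit_vector a"
proof -
  have fin: "finite I" using assms(1,2) finite_subset by blast
  obtain c where c: "\<forall>i\<in>I. c i \<ge> 0" "(\<Sum>i\<in>I. c i) = 1"
    "y = (\<lambda>v. \<Sum>i\<in>I. c i * (if v = i then 1 else 0))"
    using assms(5) unfolding maximizes_def simplex_def by blast
  have "pairing V w (unit_vector a) \<le> pairing V w y"
    using assms(5) unit_vector_in_simplex[OF fin assms(3)] unfolding maximizes_def by blast
  moreover have "pairing V w (unit_vector a) = w a"
    using assms(2,3) by (intro pairing_unit_vector[OF assms(1)]) blast
  moreover have "pairing V w y = (\<Sum>i\<in>I. c i * w i)"
    unfolding c(3) by (rule pairing_simplex_point[OF assms(1,2)])
  moreover have "(\<Sum>i\<in>I. c i * (w a - w i)) = (\<Sum>i\<in>I. c i) * w a - (\<Sum>i\<in>I. c i * w i)"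
    by (simp add: right_diff_distrib sum_subtractf sum_distrib_right)
  ultimately have le: "(\<Sum>i\<in>I. c i * (w a - w i)) \<le> 0" using c(2) by simp
  have nonneg: "\<forall>i\<in>I. 0 \<le> c i * (w a - w i)"
    using c(1) assms(4) by (metis diff_ge_0_iff_ge less_eq_real_def mult_nonneg_nonneg order_refl)
  then have "(\<Sum>i\<in>I. c i * (w a - w i)) = 0" using le by (meson order_antisym sum_nonneg)
  then have "\<forall>i\<in>I. c i * (w a - w i) = 0" using nonneg by (simp add: sum_nonneg_eq_0_iff[OF fin])
  then have c0: "c i = 0" if "i \<in> I" "i \<noteq> a" for i
    using that assms(4) by fastforce
  have "c a = 1"
    using c(2) sum.remove[OF fin assms(3), of c] sum.neutral[of "I - {a}" c] c0 by simp
  show ?thesis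
  proof
    fix v
    have "y v = (\<Sum>i\<in>I. if i = a then unit_vector a v else 0)"
      unfolding c(3) using c0 \<open>c a = 1\<close> by (intro sum.cong) (auto simp: unit_vector_def)
    then show "y v = unit_vector a v" using fin assms(3) by simp
  qed
qed

lemma simplex_has_maximizer:
  assumes "finite V" and "I \<subseteq> V" and "I \<noteq> {}"
  shows "\<exists>x. maximizes V w (simplex I) x"
proof -
  obtain a where "a \<in> I" "\<forall>b\<in>I. w b \<le> w a"
    using finite_ex_max[OF finite_subset[OF assms(2,1)] assms(3)] by blast
  then show ?thesis using maximizes_simplex_unit_vector[OF assms(1,2)] by blast
qed

lemma unique_maximizer_simplex_iff:
  assumes "finite V" and "I \<subseteq> V" and "I \<noteq> {}"
  shows "(\<exists>!x. maximizes V w (simplex I) x) \<longleftrightarrow> (\<exists>!a. a \<in> I \<and> (\<forall>b\<in>I. w b \<le> w a))"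
proof -
  have fin: "finite I" using assms(1,2) finite_subset by blast
  obtain a0 where a0: "a0 \<in> I" "\<forall>b\<in>I. w b \<le> w a0"
    using finite_ex_max[OF fin assms(3)] by blast
  show ?thesis
  proof
    assume uniq: "\<exists>!x. maximizes V w (simplex I) x"
    have "b = a0" if b: "b \<in> I" "\<forall>c\<in>I. w c \<le> w b" for b
    proof (rule ccontr)
      assume "b \<noteq> a0"
      have "unit_vector b = unit_vector a0"
        using uniq maximizes_simplex_unit_vector[OF assms(1,2)] a0 b by blast
      then have "unit_vector b b = unit_vector a0 b" by simp
      then show False using \<open>b \<noteq> a0\<close> by (simp add: unit_vector_def)
    qed
    then show "\<exists>!a. a \<in> I \<and> (\<forall>b\<in>I. w b \<le> w a)" using a0 by blast
  next
    assume uniq: "\<exists>!a. a \<in> I \<and> (\<forall>b\<in>I. w b \<le> w a)"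
    have strict: "\<forall>b\<in>I. b \<noteq> a0 \<longrightarrow> w b < w a0"
    proof (intro ballI impI)
      fix b assume b: "b \<in> I" "b \<noteq> a0"
      show "w b < w a0"
      proof (rule ccontr)
        assume "\<not> w b < w a0"
        then have "\<forall>c\<in>I. w c \<le> w b" using a0(2) by force
        then show False using uniq a0 b by blast
      qed
    qed
    show "\<exists>!x. maximizes V w (simplex I) x"
      using maximizes_simplex_unit_vector[OF assms(1,2) a0]
        maximizer_simplex_eq_unit_vector[OF assms(1,2) a0(1) strict] by blast
  qed
qed

section \<open>Ordered colorings and connected sets\<close>

lemma is_path_infix:
  assumes "is_path E (xs @ ys @ zs)" and "ys \<noteq> []"
  shows "is_path E ys"
  using assms unfolding is_path_def by (auto simp: successively_append_iff)

lemma is_path_rev: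
  assumes "\<And>u w. E u w \<Longrightarrow> E w u" and "is_path E ps"
  shows "is_path E (rev ps)"
proof -
  have "successively (\<lambda>x y. E y x) ps" using assms unfolding is_path_def
    by (auto elim: successively_mono)
  then show ?thesis using assms(2) unfolding is_path_def by simp
qed

lemma induced_connected_path:
  assumes "\<And>u w. E u w \<Longrightarrow> E w u" and "is_path E ps"
  shows "induced_connected E (set ps)"
  unfolding induced_connected_def
proof (intro ballI)
  fix a b assume a: "a \<in> set ps" and b: "b \<in> set ps"
  show "\<exists>xs. is_path E (a # xs @ [b]) \<and> set xs \<subseteq> set ps \<or> a = b"
  proof (cases "a = b")
    case False
    obtain p1 p2 where ps: "ps = p1 @ a # p2" using a by (meson split_list)
    from b False ps consider "b \<in> set p2" | "b \<in> set p1" by auto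
    then show ?thesis
    proof cases
      case 1
      then obtain q1 q2 where "p2 = q1 @ b # q2" by (meson split_list)
      then have "is_path E (a # q1 @ [b])"
        using is_path_infix[of E p1 "a # q1 @ [b]" q2] assms(2) ps by simp
      then show ?thesis using ps \<open>p2 = q1 @ b # q2\<close> by auto
    next
      case 2
      then obtain q1 q2 where q: "p1 = q1 @ b # q2" by (meson split_list)
      then have "is_path E (b # q2 @ [a])"
        using is_path_infix[of E q1 "b # q2 @ [a]" p2] assms(2) ps by simp
      then have "is_path E (a # rev q2 @ [b])" using is_path_rev[OF assms(1)] by fastforce
      then show ?thesis using ps q by auto
    qed
  qed simp
qed

lemma path_to_first_hit:
  fixes f :: "'a \<Rightarrow> 'b::linorder"
  assumes "is_path E (u # xs @ [w])" and "f w = f u" and "\<forall>v\<in>set xs. f v \<le> f u"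
  obtains ys w' where "is_path E (u # ys @ [w'])" and "w' \<in> set (xs @ [w])" and "f w' = f u"
    and "set ys \<subseteq> set xs" and "\<forall>v\<in>set ys. f v < f u"
proof -
  have "\<exists>v\<in>set (xs @ [w]). f v = f u" using assms(2) by simp
  then obtain ys w' zs where split: "xs @ [w] = ys @ w' # zs" "f w' = f u" "\<forall>y\<in>set ys. f y \<noteq> f u"
    by (rule split_list_first_propE)
  have path: "is_path E (u # ys @ [w'])"
    using is_path_infix[of E "[]" "u # ys @ [w']" zs] assms(1) split(1) by simp
  have ys: "set ys \<subseteq> set xs"
  proof
    fix y assume y: "y \<in> set ys"
    then have "y \<in> set (xs @ [w])" unfolding split(1) by simp
    moreover have "y \<noteq> w" using y split(3) assms(2) by auto
    ultimately show "y \<in> set xs" by simp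
  qed
  have "\<forall>v\<in>set ys. f v < f u" using ys split(3) assms(3) by force
  moreover have "w' \<in> set (xs @ [w])" unfolding split(1) by simp
  ultimately show ?thesis using that[OF path _ split(2) ys] by blast
qed

lemma ordered_coloring_iff:
  "ordered_coloring V E f \<longleftrightarrow> (\<forall>u\<in>V. \<forall>w\<in>V. f u = f w \<and> u \<noteq> w \<longrightarrow>
     \<not> (\<exists>xs. is_path E (u # xs @ [w]) \<and> set xs \<subseteq> {v\<in>V. f v < f u}))"
  unfolding ordered_coloring_def by fastforce

lemma unique_max_if_ordered_coloring:
  assumes "finite V" and "ordered_coloring V E f" and "I \<in> building_set V E"
  shows "\<exists>!a. a \<in> I \<and> (\<forall>b\<in>I. f b \<le> f a)"
proof -
  have I: "I \<subseteq> V" "I \<noteq> {}" "induced_connected E I" using assms(3) unfolding building_set_def by auto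
  obtain a where a: "a \<in> I" "\<forall>b\<in>I. f b \<le> f a"
    using finite_ex_max[OF finite_subset[OF I(1) assms(1)] I(2)] by blast
  have "b = a" if b: "b \<in> I" "\<forall>c\<in>I. f c \<le> f b" for b
  proof (rule ccontr)
    assume "b \<noteq> a"
    moreover have "\<exists>xs. is_path E (a # xs @ [b]) \<and> set xs \<subseteq> I \<or> a = b"
      using I(3) a(1) b(1) unfolding induced_connected_def by blast
    ultimately obtain xs where xs: "is_path E (a # xs @ [b])" "set xs \<subseteq> I" by blast
    have "f b = f a" using a b by (simp add: order_antisym)
    then obtain ys w' where ys: "is_path E (a # ys @ [w'])" "w' \<in> set (xs @ [b])" "f w' = f a"
      "set ys \<subseteq> set xs" "\<forall>v\<in>set ys. f v < f a"
      using path_to_first_hit[OF xs(1)] xs(2) a(2) by blast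
    have "a \<noteq> w'" using ys(1,2) unfolding is_path_def by auto
    moreover have small: "set ys \<subseteq> {v\<in>V. f v < f a}" and "a \<in> V" "w' \<in> V"
      using ys(2,4,5) xs(2) I(1) a(1) b(1) by auto
    ultimately have "\<not> (\<exists>zs. is_path E (a # zs @ [w']) \<and> set zs \<subseteq> {v\<in>V. f v < f a})"
      using assms(2)[unfolded ordered_coloring_iff, rule_format, of a w'] ys(3) by simp
    then show False using ys(1) small by blast
  qed
  with a show ?thesis by (intro ex1I[of _ a]) blast+
qed

lemma ordered_coloring_if_unique_max:
  assumes "\<And>u w. E u w \<Longrightarrow> E w u"
    and "\<forall>I\<in>building_set V E. \<exists>!a. a \<in> I \<and> (\<forall>b\<in>I. f b \<le> f a)"
  shows "ordered_coloring V E f"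
  unfolding ordered_coloring_iff
proof (intro ballI impI notI)
  fix u w assume uw: "u \<in> V" "w \<in> V" "f u = f w \<and> u \<noteq> w"
    and "\<exists>xs. is_path E (u # xs @ [w]) \<and> set xs \<subseteq> {v\<in>V. f v < f u}"
  then obtain xs where xs: "is_path E (u # xs @ [w])" "set xs \<subseteq> {v\<in>V. f v < f u}" by blast
  define I where "I = set (u # xs @ [w])"
  have "I \<subseteq> V" unfolding I_def using uw xs(2) by auto
  moreover have "induced_connected E I" unfolding I_def by (rule induced_connected_path[OF assms(1) xs(1)])
  ultimately have "I \<in> building_set V E" unfolding building_set_def I_def by simp
  with assms(2) have "\<exists>!a. a \<in> I \<and> (\<forall>b\<in>I. f b \<le> f a)" by (rule bspec)
  then obtain a where "a \<in> I \<and> (\<forall>b\<in>I. f b \<le> f a)"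
    and a: "\<forall>c. c \<in> I \<and> (\<forall>b\<in>I. f b \<le> f c) \<longrightarrow> c = a"
    by (rule ex1E)
  have "u \<in> I" "w \<in> I" "\<forall>b\<in>I. f b \<le> f u" "\<forall>b\<in>I. f b \<le> f w"
    using uw xs(2) unfolding I_def by auto
  then have "u = a" "w = a" using a by blast+
  then show False using uw(3) by simp
qed

lemma ordered_coloring_iff_unique_max:
  assumes "finite V" and "\<And>u w. E u w \<Longrightarrow> E w u"
  shows "ordered_coloring V E f \<longleftrightarrow> (\<forall>I\<in>building_set V E. \<exists>!a. a \<in> I \<and> (\<forall>b\<in>I. f b \<le> f a))"
proof
  show "ordered_coloring V E f \<Longrightarrow> \<forall>I\<in>building_set V E. \<exists>!a. a \<in> I \<and> (\<forall>b\<in>I. f b \<le> f a)"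
    by (intro ballI unique_max_if_ordered_coloring[OF assms(1)])
qed (rule ordered_coloring_if_unique_max[OF assms(2)])

lemma generic_graph_associahedron_iff_ordered_coloring:
  assumes "simple_graph V E"
  shows "generic V (graph_associahedron V E) f \<longleftrightarrow> ordered_coloring V E f"
proof -
  have fin: "finite V" and sym: "\<And>u w. E u w \<Longrightarrow> E w u"
    using assms unfolding simple_graph_def by auto
  define B where "B = building_set V E"
  have B: "I \<subseteq> V" "I \<noteq> {}" if "I \<in> B" for I using that unfolding B_def building_set_def by auto
  have "finite B" using fin unfolding B_def building_set_def by (auto intro: finite_subset[of _ "Pow V"])
  have "generic V (graph_associahedron V E) f
      \<longleftrightarrow> (\<exists>!x. maximizes V (\<lambda>v. real (f v)) (minkowski_sum B simplex) x)"
    unfolding generic_iff_unique_maximizer graph_associahedron_def B_def ..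
  also have "\<dots> \<longleftrightarrow> (\<forall>I\<in>B. \<exists>!x. maximizes V (\<lambda>v. real (f v)) (simplex I) x)"
    using \<open>finite B\<close> B simplex_has_maximizer[OF fin] by (intro unique_maximizer_minkowski_sum_iff) auto
  also have "\<dots> \<longleftrightarrow> (\<forall>I\<in>B. \<exists>!a. a \<in> I \<and> (\<forall>b\<in>I. f b \<le> f a))"
    using B unique_maximizer_simplex_iff[OF fin] by simp
  also have "\<dots> \<longleftrightarrow> ordered_coloring V E f"
    unfolding B_def by (rule ordered_coloring_iff_unique_max[OF fin sym, symmetric])
  finally show ?thesis .
qed

section \<open>Expansion in monomial quasisymmetric functions\<close>

definition monomial_mset :: "nat list \<Rightarrow> 'b list \<Rightarrow> 'b multiset" where
  "monomial_mset \<alpha> ys = (\<Sum>j<length \<alpha>. replicate_mset (\<alpha> ! j) (ys ! j))"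

lemma M_coeff_monomial_mset:
  "M_coeff \<alpha> m = (if \<exists>ys. length ys = length \<alpha> \<and> sorted_wrt (<) ys \<and> (\<forall>i\<in>set ys. i \<ge> 1)
      \<and> m = monomial_mset \<alpha> ys then 1 else 0)"
  unfolding M_coeff_def monomial_mset_def ..

lemma count_monomial_mset:
  "count (monomial_mset \<alpha> ys) x = (\<Sum>j<length \<alpha>. if ys ! j = x then \<alpha> ! j else 0)"
  by (simp add: monomial_mset_def count_sum eq_commute)

lemma count_monomial_mset_nth:
  assumes "distinct ys" and "length ys = length \<alpha>" and "j < length \<alpha>"
  shows "count (monomial_mset \<alpha> ys) (ys ! j) = \<alpha> ! j"
proof -
  have "count (monomial_mset \<alpha> ys) (ys ! j) = (\<Sum>i<length \<alpha>. if i = j then \<alpha> ! j else 0)"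
    unfolding count_monomial_mset using assms by (intro sum.cong) (auto simp: nth_eq_iff_index_eq)
  then show ?thesis using assms(3) by simp
qed

lemma count_monomial_mset_notin:
  assumes "length ys = length \<alpha>" and "x \<notin> set ys"
  shows "count (monomial_mset \<alpha> ys) x = 0"
  unfolding count_monomial_mset using assms by (auto intro!: sum.neutral)

lemma set_monomial_mset:
  assumes "length ys = length \<alpha>" and "\<forall>a\<in>set \<alpha>. a \<ge> 1"
  shows "set_mset (monomial_mset \<alpha> ys) = set ys"
proof -
  have "\<alpha> ! j \<noteq> 0" if "j < length \<alpha>" for j using assms(2) that nth_mem by fastforce
  then have "set_mset (monomial_mset \<alpha> ys) = (\<Union>j<length ys. {ys ! j})"
    unfolding monomial_mset_def using assms(1) by (auto simp: set_mset_sum)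
  also have "\<dots> = set ys" by (auto simp: in_set_conv_nth)
  finally show ?thesis .
qed

lemma size_monomial_mset: "size (monomial_mset \<alpha> ys) = sum_list \<alpha>"
  by (simp add: monomial_mset_def size_multiset_sum sum_list_sum_nth atLeast0LessThan)

lemma image_mset_sum: "image_mset h (sum F A) = (\<Sum>a\<in>A. image_mset h (F a))"
  by (induction A rule: infinite_finite_induct) auto

lemma image_monomial_mset:
  assumes "length ys = length \<alpha>"
  shows "image_mset h (monomial_mset \<alpha> ys) = monomial_mset \<alpha> (map h ys)"
  unfolding monomial_mset_def image_mset_sum using assms by (intro sum.cong) auto

definition exponent_composition :: "'a::linorder multiset \<Rightarrow> nat list" where
  "exponent_composition m = map (count m) (sorted_list_of_set (set_mset m))"

lemma monomial_mset_exponent_composition: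
  "monomial_mset (exponent_composition m) (sorted_list_of_set (set_mset m)) = m"
proof (rule multiset_eqI)
  fix x
  define ix where "ix = sorted_list_of_set (set_mset m)"
  have ix: "distinct ix" "set ix = set_mset m" unfolding ix_def by auto
  show "count (monomial_mset (exponent_composition m) ix) x = count m x"
  proof (cases "x \<in> set ix")
    case True
    then obtain j where "j < length ix" "x = ix ! j" by (auto simp: in_set_conv_nth)
    then show ?thesis
      using count_monomial_mset_nth[OF ix(1)] unfolding exponent_composition_def ix_def by simp
  next
    case False
    then show ?thesis using count_monomial_mset_notin[of ix "map (count m) ix" x] ix(2)
      unfolding exponent_composition_def ix_def by (simp add: not_in_iff)
  qed
qed

lemma exponent_composition_monomial_mset:
  assumes "sorted_wrt (<) ys" and "length ys = length \<alpha>" and "\<forall>a\<in>set \<alpha>. a \<ge> 1"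
  shows "exponent_composition (monomial_mset \<alpha> ys) = \<alpha>"
proof -
  have "sorted ys" "distinct ys" using assms(1) by (simp_all add: strict_sorted_iff)
  then have "sorted_list_of_set (set_mset (monomial_mset \<alpha> ys)) = ys"
    unfolding set_monomial_mset[OF assms(2,3)] by (rule sorted_list_of_set.idem_if_sorted_distinct)
  moreover have "map (count (monomial_mset \<alpha> ys)) ys = \<alpha>"
    using count_monomial_mset_nth[OF \<open>distinct ys\<close> assms(2)] assms(2) by (intro nth_equalityI) auto
  ultimately show ?thesis unfolding exponent_composition_def by simp
qed

lemma exponent_composition_in_compositions: "exponent_composition m \<in> compositions (size m)"
proof -
  have "sum_list (exponent_composition m) = size m"
    using size_monomial_mset[of "exponent_composition m" "sorted_list_of_set (set_mset m)"]
    unfolding monomial_mset_exponent_composition by simp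
  then show ?thesis unfolding compositions_def exponent_composition_def by (auto simp: Suc_le_eq)
qed

lemma M_coeff_exponent_composition:
  assumes "0 \<notin># m"
  shows "M_coeff (exponent_composition m) m = 1"
proof -
  define ix where "ix = sorted_list_of_set (set_mset m)"
  have "\<forall>i\<in>set ix. i \<ge> 1" using assms unfolding ix_def by (auto simp: Suc_le_eq intro: gr0I)
  moreover have "length ix = length (exponent_composition m)" "sorted_wrt (<) ix"
    "m = monomial_mset (exponent_composition m) ix"
    using monomial_mset_exponent_composition[of m] unfolding ix_def exponent_composition_def by auto
  ultimately show ?thesis unfolding M_coeff_monomial_mset by auto
qed

lemma M_coeff_nonzero_imp:
  assumes "\<forall>a\<in>set \<alpha>. a \<ge> 1" and "M_coeff \<alpha> m \<noteq> 0"
  shows "\<alpha> = exponent_composition m" and "0 \<notin># m"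
proof -
  obtain ys where ys: "length ys = length \<alpha>" "sorted_wrt (<) ys" "\<forall>i\<in>set ys. i \<ge> 1"
    "m = monomial_mset \<alpha> ys"
    using assms(2) unfolding M_coeff_monomial_mset by (auto split: if_splits)
  show "\<alpha> = exponent_composition m"
    unfolding ys(4) by (rule exponent_composition_monomial_mset[OF ys(2,1) assms(1), symmetric])
  show "0 \<notin># m" unfolding ys(4) set_monomial_mset[OF ys(1) assms(1)] using ys(3) by auto
qed

lemma count_image_mset_mset_set:
  assumes "finite V"
  shows "count (image_mset f (mset_set V)) x = card {v\<in>V. f v = x}"
  using assms by (simp add: count_image_mset' Collect_conj_eq) (metis Collect_conj_eq Int_commute)

lemma image_mset_eq_monomial_mset_upt_iff:
  assumes "finite V" and "\<forall>a\<in>set \<alpha>. a \<ge> 1"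
  defines "k \<equiv> length \<alpha>"
  shows "image_mset lam (mset_set V) = monomial_mset \<alpha> [1..<k + 1]
    \<longleftrightarrow> lam ` V = {1..k} \<and> (\<forall>j<k. card {v\<in>V. lam v = j + 1} = \<alpha> ! j)"
proof -
  define ys where "ys = [1..<k + 1]"
  have ys: "distinct ys" "length ys = length \<alpha>" "set ys = {1..k}" "\<forall>j<k. ys ! j = j + 1"
    unfolding ys_def k_def by (auto simp del: upt_Suc)
  have count: "count (image_mset lam (mset_set V)) x = card {v\<in>V. lam v = x}" for x
    by (rule count_image_mset_mset_set[OF assms(1)])
  show ?thesis unfolding ys_def[symmetric]
  proof
    assume lam: "image_mset lam (mset_set V) = monomial_mset \<alpha> ys"
    have "lam ` V = set_mset (image_mset lam (mset_set V))" using assms(1) by simp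
    then have "lam ` V = {1..k}" unfolding lam set_monomial_mset[OF ys(2) assms(2)] ys(3) .
    moreover have "card {v\<in>V. lam v = j + 1} = \<alpha> ! j" if "j < k" for j
      using count[of "j + 1"] count_monomial_mset_nth[OF ys(1,2)] ys(4) that
      unfolding lam k_def by simp
    ultimately show "lam ` V = {1..k} \<and> (\<forall>j<k. card {v\<in>V. lam v = j + 1} = \<alpha> ! j)" by blast
  next
    assume lam: "lam ` V = {1..k} \<and> (\<forall>j<k. card {v\<in>V. lam v = j + 1} = \<alpha> ! j)"
    show "image_mset lam (mset_set V) = monomial_mset \<alpha> ys"
    proof (rule multiset_eqI)
      fix x
      show "count (image_mset lam (mset_set V)) x = count (monomial_mset \<alpha> ys) x"
      proof (cases "x \<in> {1..k}")
        case True
        then have j: "x - 1 < k" "ys ! (x - 1) = x" using ys(4) by auto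
        then have "card {v\<in>V. lam v = x - 1 + 1} = \<alpha> ! (x - 1)" using lam by blast
        then have "count (image_mset lam (mset_set V)) x = \<alpha> ! (x - 1)" unfolding count using True by simp
        then show ?thesis using count_monomial_mset_nth[OF ys(1,2), of "x - 1"] j unfolding k_def by simp
      next
        case False
        then have "{v\<in>V. lam v = x} = {}" using lam by blast
        then have "count (image_mset lam (mset_set V)) x = 0" unfolding count by (simp only: card.empty)
        then show ?thesis using False count_monomial_mset_notin[OF ys(2), of x] ys(3) by simp
      qed
    qed
  qed
qed

lemma zeta_eq_F_graph:
  assumes "finite V" and "\<forall>a\<in>set \<alpha>. a \<ge> 1"
  shows "zeta V E \<alpha> = F_graph V E (monomial_mset \<alpha> [1..<length \<alpha> + 1])"
  unfolding zeta_def F_graph_def image_mset_eq_monomial_mset_upt_iff[OF assms] by (simp add: conj_ac)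

lemma ordered_coloring_comp:
  assumes "strict_mono_on (lam ` V) h" and "\<forall>v\<in>V. mu v = h (lam v)"
  shows "ordered_coloring V E mu \<longleftrightarrow> ordered_coloring V E lam"
proof -
  have "mu u = mu w \<longleftrightarrow> lam u = lam w" if "u \<in> V" "w \<in> V" for u w
    using strict_mono_on_eq[OF assms(1)] assms(2) that by simp
  moreover have "{v\<in>V. mu v < mu u} = {v\<in>V. lam v < lam u}" if "u \<in> V" for u
    using strict_mono_on_less[OF assms(1)] assms(2) that by auto
  ultimately show ?thesis unfolding ordered_coloring_iff by auto
qed

lemma strict_mono_on_inv_into:
  fixes h :: "'a::linorder \<Rightarrow> 'b::linorder"
  assumes "strict_mono_on S h"
  shows "strict_mono_on (h ` S) (inv_into S h)"
proof (rule strict_mono_onI)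
  fix x y assume "x \<in> h ` S" "y \<in> h ` S" "x < y"
  then obtain a b where "a \<in> S" "b \<in> S" "x = h a" "y = h b" "h a < h b" by blast
  moreover have "inj_on h S" using assms by (rule strict_mono_on_imp_inj_on)
  ultimately show "inv_into S h x < inv_into S h y"
    using strict_mono_on_less[OF assms] by simp
qed

lemma finite_pos_maps_content:
  assumes "finite V"
  shows "finite {lam \<in> pos_maps V. image_mset lam (mset_set V) = m}"
proof (rule finite_subset)
  show "{lam \<in> pos_maps V. image_mset lam (mset_set V) = m}
      \<subseteq> {f. \<forall>x. (x \<in> V \<longrightarrow> f x \<in> set_mset m) \<and> (x \<notin> V \<longrightarrow> f x = 0)}"
    using assms unfolding pos_maps_def by auto
qed (use assms in \<open>auto intro: finite_set_of_finite_funs\<close>)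

lemma relabel_ordered_coloring:
  assumes "finite V" and "lam \<in> pos_maps V" and "ordered_coloring V E lam"
    and "image_mset lam (mset_set V) = m"
    and "strict_mono_on (set_mset m) h" and "0 \<notin> h ` set_mset m"
  defines "mu \<equiv> \<lambda>v. if v \<in> V then h (lam v) else 0"
  shows "mu \<in> pos_maps V" and "ordered_coloring V E mu" and "image_mset mu (mset_set V) = image_mset h m"
proof -
  have range: "lam ` V = set_mset m" using assms(1,4) by auto
  have "h (lam v) \<noteq> 0" if "v \<in> V" for v using range assms(6) that by (metis image_eqI)
  then show "mu \<in> pos_maps V" unfolding mu_def pos_maps_def by (simp add: Suc_le_eq)
  show "ordered_coloring V E mu"
    using ordered_coloring_comp[of lam V h mu E] range assms(3,5) unfolding mu_def by simp
  have "image_mset mu (mset_set V) = image_mset h (image_mset lam (mset_set V))"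
    unfolding mu_def image_mset.compositionality using assms(1) by (intro image_mset_cong) simp
  then show "image_mset mu (mset_set V) = image_mset h m" unfolding assms(4) .
qed

lemma F_graph_le_image_mset:
  assumes "finite V" and "strict_mono_on (set_mset m) h" and "0 \<notin> h ` set_mset m"
  shows "F_graph V E m \<le> F_graph V E (image_mset h m)"
proof -
  define L where "L m' = {lam \<in> pos_maps V. ordered_coloring V E lam \<and> image_mset lam (mset_set V) = m'}"
    for m'
  define g where "g lam = (\<lambda>v. if v \<in> V then h (lam v) else 0)" for lam :: "'a \<Rightarrow> nat"
  have range: "lam ` V = set_mset m" if "lam \<in> L m" for lam
    using that assms(1) unfolding L_def by auto
  have "g ` L m \<subseteq> L (image_mset h m)"
    using relabel_ordered_coloring[OF assms(1) _ _ _ assms(2,3)] unfolding L_def g_def by blast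
  moreover have "inj_on g (L m)"
  proof (rule inj_onI, rule ext)
    fix lam lam' v assume lam: "lam \<in> L m" "lam' \<in> L m" and "g lam = g lam'"
    show "lam v = lam' v"
    proof (cases "v \<in> V")
      case True
      then have "h (lam v) = h (lam' v)" using \<open>g lam = g lam'\<close> unfolding g_def by metis
      moreover have "lam v \<in> set_mset m" "lam' v \<in> set_mset m"
        using range[OF lam(1)] range[OF lam(2)] True by blast+
      ultimately show ?thesis using strict_mono_on_eqD[OF assms(2)] by metis
    qed (use lam in \<open>auto simp: L_def pos_maps_def\<close>)
  qed
  moreover have "finite (L (image_mset h m))"
    using finite_pos_maps_content[OF assms(1)] unfolding L_def by (rule rev_finite_subset) auto
  ultimately have "card (L m) \<le> card (L (image_mset h m))" by (intro card_inj_on_le)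
  then show ?thesis unfolding F_graph_def L_def .
qed

lemma F_graph_image_mset:
  assumes "finite V" and "strict_mono_on (set_mset m) h" and "0 \<notin># m" and "0 \<notin> h ` set_mset m"
  shows "F_graph V E (image_mset h m) = F_graph V E m"
proof (rule antisym)
  define h' where "h' = inv_into (set_mset m) h"
  have inj: "inj_on h (set_mset m)" using assms(2) by (rule strict_mono_on_imp_inj_on)
  have "image_mset (h' \<circ> h) m = image_mset id m"
    by (rule image_mset_cong) (simp add: h'_def inj)
  then have cancel: "image_mset h' (image_mset h m) = m" by (simp add: image_mset.compositionality)
  have "F_graph V E (image_mset h m) \<le> F_graph V E (image_mset h' (image_mset h m))"
  proof (rule F_graph_le_image_mset[OF assms(1)])
    show "strict_mono_on (set_mset (image_mset h m)) h'"
      unfolding h'_def set_image_mset by (rule strict_mono_on_inv_into[OF assms(2)])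
    show "0 \<notin> h' ` set_mset (image_mset h m)"
      unfolding h'_def set_image_mset inv_into_image_cancel[OF inj subset_refl] using assms(3) .
  qed
  then show "F_graph V E (image_mset h m) \<le> F_graph V E m" unfolding cancel .
qed (rule F_graph_le_image_mset[OF assms(1,2,4)])

lemma zeta_eq_F_graph_monomial_mset:
  assumes "finite V" and "\<forall>a\<in>set \<alpha>. a \<ge> 1"
    and "length ys = length \<alpha>" and "sorted_wrt (<) ys" and "\<forall>i\<in>set ys. i \<ge> 1"
  shows "zeta V E \<alpha> = F_graph V E (monomial_mset \<alpha> ys)"
proof -
  define k where "k = length \<alpha>"
  define h where "h j = ys ! (j - 1)" for j
  have std: "set [1..<k + 1] = {1..k}" "length [1..<k + 1] = length \<alpha>"
    unfolding k_def by (auto simp del: upt_Suc)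
  have "map h [1..<k + 1] = ys"
    unfolding h_def k_def using assms(3) by (intro nth_equalityI) (auto simp del: upt_Suc)
  moreover have "strict_mono_on {1..k} h"
    unfolding h_def k_def using assms(3,4) by (intro strict_mono_onI) (auto simp: sorted_wrt_iff_nth_less)
  moreover have "0 \<notin> h ` {1..k}"
  proof
    assume "0 \<in> h ` {1..k}"
    then obtain j where "j \<in> {1..k}" "ys ! (j - 1) = 0" unfolding h_def by auto
    then show False using assms(3,5) nth_mem[of "j - 1" ys] unfolding k_def by fastforce
  qed
  ultimately have "F_graph V E (monomial_mset \<alpha> [1..<k + 1]) = F_graph V E (monomial_mset \<alpha> ys)"
    using F_graph_image_mset[OF assms(1), of "monomial_mset \<alpha> [1..<k + 1]" h E]
    unfolding set_monomial_mset[OF std(2) assms(2)] std(1) image_monomial_mset[OF std(2)] by simp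
  then show ?thesis unfolding zeta_eq_F_graph[OF assms(1,2)] k_def .
qed

lemma finite_compositions: "finite (compositions n)"
proof -
  have "length xs \<le> sum_list xs" if "\<forall>a\<in>set xs. a \<ge> 1" for xs :: "nat list"
    using that by (induction xs) auto
  then have "compositions n \<subseteq> {xs. set xs \<subseteq> {0..n} \<and> length xs \<le> n}"
    unfolding compositions_def using member_le_sum_list by fastforce
  then show ?thesis using finite_lists_length_le[of "{0..n}" n] finite_subset by blast
qed

lemma F_graph_nonzero_imp:
  assumes "finite V" and "F_graph V E m \<noteq> 0"
  shows "size m = card V" and "0 \<notin># m"
proof -
  have "{lam \<in> pos_maps V. ordered_coloring V E lam \<and> image_mset lam (mset_set V) = m} \<noteq> {}"
    using assms(2) unfolding F_graph_def by (intro notI) simp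
  then obtain lam where lam: "lam \<in> pos_maps V" "image_mset lam (mset_set V) = m" by blast
  show "size m = card V" using lam(2) assms(1) by (metis size_image_mset size_mset_set)
  have "\<forall>v\<in>V. lam v \<noteq> 0" using lam(1) unfolding pos_maps_def by fastforce
  moreover have "set_mset m = lam ` V" using lam(2) assms(1) by auto
  ultimately show "0 \<notin># m" by auto
qed

lemma F_graph_eq_zeta_exponent_composition:
  assumes "finite V" and "0 \<notin># m"
  shows "F_graph V E m = zeta V E (exponent_composition m)"
proof -
  define ix where "ix = sorted_list_of_set (set_mset m)"
  have "\<forall>i\<in>set ix. i \<ge> 1" using assms(2) unfolding ix_def by (auto simp: Suc_le_eq intro: gr0I)
  moreover have "length ix = length (exponent_composition m)" "sorted_wrt (<) ix"
    unfolding ix_def exponent_composition_def by auto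
  moreover have "\<forall>a\<in>set (exponent_composition m). a \<ge> 1"
    using exponent_composition_in_compositions[of m] unfolding compositions_def by blast
  ultimately show ?thesis
    using zeta_eq_F_graph_monomial_mset[OF assms(1), of "exponent_composition m" ix E]
    unfolding ix_def monomial_mset_exponent_composition by simp
qed

lemma F_graph_eq_zeta_M_coeff_sum:
  assumes "finite V"
  shows "F_graph V E m = (\<Sum>\<alpha>\<in>compositions (card V). zeta V E \<alpha> * M_coeff \<alpha> m)"
proof -
  define C where "C = compositions (card V)"
  define \<alpha>0 where "\<alpha>0 = exponent_composition m"
  have "M_coeff \<alpha> m = (if \<alpha> = \<alpha>0 \<and> 0 \<notin># m then 1 else 0)" if "\<alpha> \<in> C" for \<alpha>
  proof (cases "M_coeff \<alpha> m = 0")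
    case False
    moreover have "\<forall>a\<in>set \<alpha>. a \<ge> 1" using that unfolding C_def compositions_def by blast
    ultimately have "\<alpha> = \<alpha>0" "0 \<notin># m" using M_coeff_nonzero_imp unfolding \<alpha>0_def by blast+
    then show ?thesis using M_coeff_exponent_composition unfolding \<alpha>0_def by simp
  next
    case True
    then have "\<not> (\<alpha> = \<alpha>0 \<and> 0 \<notin># m)"
      using M_coeff_exponent_composition[of m] unfolding \<alpha>0_def by (metis zero_neq_one)
    then show ?thesis using True by simp
  qed
  then have "(\<Sum>\<alpha>\<in>C. zeta V E \<alpha> * M_coeff \<alpha> m)
      = (\<Sum>\<alpha>\<in>C. if \<alpha> = \<alpha>0 then (if 0 \<notin># m then zeta V E \<alpha>0 else 0) else 0)"
    by (intro sum.cong) auto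
  also have "\<dots> = (if \<alpha>0 \<in> C \<and> 0 \<notin># m then zeta V E \<alpha>0 else 0)"
    using finite_compositions unfolding C_def by (simp add: sum.delta')
  also have "\<dots> = F_graph V E m"
    using F_graph_eq_zeta_exponent_composition[OF assms] F_graph_nonzero_imp[OF assms]
      exponent_composition_in_compositions[of m] unfolding C_def \<alpha>0_def by fastforce
  finally show ?thesis unfolding C_def by simp
qed

theorem mainTheorem9:
  fixes V :: "'a set" and E :: "'a \<Rightarrow> 'a \<Rightarrow> bool"
  assumes "simple_graph V E"
  shows "F_poly V (graph_associahedron V E) = F_graph V E
    \<and> (\<forall>m. F_graph V E m = (\<Sum>\<alpha>\<in>compositions (card V). zeta V E \<alpha> * M_coeff \<alpha> m))"
proof
  show "F_poly V (graph_associahedron V E) = F_graph V E"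
    unfolding F_poly_def F_graph_def
    by (simp add: generic_graph_associahedron_iff_ordered_coloring[OF assms])
  have "finite V" using assms unfolding simple_graph_def by blast
  then show "\<forall>m. F_graph V E m = (\<Sum>\<alpha>\<in>compositions (card V). zeta V E \<alpha> * M_coeff \<alpha> m)"
    by (simp add: F_graph_eq_zeta_M_coeff_sum)
qed

end
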